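(* In a Fisher market in which every buyer has a Leontief utility function, run asynchronous tatonnement with update rule $p_j^{t+}=p_j^t(1+\lambda\min\{\tilde z_j,1\}(t-\tau_j))$, $0<\lambda\le\frac1{23.46}$, from strictly positive initial prices. Then for every $\epsilon>0$ there is a finite time $T_\epsilon$ such that for every good $j$, every $t\ge T_\epsilon$ and every $0\le\Delta t\le1$, $|p_j^t-p_j^{t+\Delta t}|\le\epsilon$.
   Context: A Fisher market has $n$ goods, each with supply $1$, and buyers $i$ with budgets $e_i>0$. At prices $p$, buyer $i$ demands a utility-maximizing bundle $(x_{ij}(p))_j$ of cost at most $e_i$; $x_j(p)=\sum_ix_{ij}(p)$, excess demand $z_j(p)=x_j(p)-1$. A Leontief utility is $u_i(x)=\min_{j\in S_i}b_{ij}x_{ij}$ for a nonempty set $S_i$ of goods and $b_{ij}>0$. Asynchronous tatonnement: continuous time $t\ge0$; each price $p_j$ changes only at discrete update times, no two updates simultaneous, consecutive updates to the same price at most one time unit apart; $p^t$ denotes current prices just before any update at time $t$, $p_j^{t+}$ the value just after. At an update to $p_j$ at time $t$, $\tau_j$ is the previous update time of $p_j$ ($0$ if none) and $\tilde z_j$ is any value between the minimum and maximum of $z_j(p^{t'})$ over $t'\in(\tau_j,t]$. *)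

theory Defs
  imports Complex_Main
begin

text \<open>Buyers are the elements of a finite type 'b, goods the elements of a finite
  type 'g; every good has supply 1.  A bundle / price vector is a function on goods.\<close>

definition leontief_util :: "('b \<Rightarrow> 'g set) \<Rightarrow> ('b \<Rightarrow> 'g \<Rightarrow> real) \<Rightarrow> 'b \<Rightarrow> ('g \<Rightarrow> real) \<Rightarrow> real" where
  "leontief_util S b i x = Min ((\<lambda>j. b i j * x j) ` S i)"

definition leontief_fisher_market ::
  "('b::finite \<Rightarrow> real) \<Rightarrow> ('b \<Rightarrow> 'g::finite set) \<Rightarrow> ('b \<Rightarrow> 'g \<Rightarrow> real) \<Rightarrow> bool" where
  "leontief_fisher_market e S b \<longleftrightarrow>
     (\<forall>i. 0 < e i) \<and> (\<forall>i. S i \<noteq> {}) \<and> (\<forall>i. \<forall>j\<in>S i. 0 < b i j)"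

definition affordable :: "('g::finite \<Rightarrow> real) \<Rightarrow> real \<Rightarrow> ('g \<Rightarrow> real) \<Rightarrow> bool" where
  "affordable p budget x \<longleftrightarrow> (\<forall>j. 0 \<le> x j) \<and> (\<Sum>j\<in>UNIV. p j * x j) \<le> budget"

definition demand_bundle ::
  "(('g::finite \<Rightarrow> real) \<Rightarrow> real) \<Rightarrow> ('g \<Rightarrow> real) \<Rightarrow> real \<Rightarrow> ('g \<Rightarrow> real) \<Rightarrow> bool" where
  "demand_bundle u p budget x \<longleftrightarrow>
     affordable p budget x \<and> (\<forall>y. affordable p budget y \<longrightarrow> u y \<le> u x)"

text \<open>D p i is the bundle demanded by buyer i at prices p (for strictly positive prices,
  where the Leontief demand exists).\<close>
definition is_leontief_demand ::
  "('b::finite \<Rightarrow> real) \<Rightarrow> ('b \<Rightarrow> 'g::finite set) \<Rightarrow> ('b \<Rightarrow> 'g \<Rightarrow> real)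
     \<Rightarrow> (('g \<Rightarrow> real) \<Rightarrow> 'b \<Rightarrow> 'g \<Rightarrow> real) \<Rightarrow> bool" where
  "is_leontief_demand e S b D \<longleftrightarrow>
     (\<forall>p. (\<forall>j. 0 < p j) \<longrightarrow> (\<forall>i. demand_bundle (leontief_util S b i) p (e i) (D p i)))"

definition excess_demand ::
  "(('g \<Rightarrow> real) \<Rightarrow> 'b::finite \<Rightarrow> 'g \<Rightarrow> real) \<Rightarrow> ('g \<Rightarrow> real) \<Rightarrow> 'g \<Rightarrow> real" where
  "excess_demand D p j = (\<Sum>i\<in>UNIV. D p i j) - 1"

text \<open>s j k is the time of the k-th update (k = 0, 1, ...) of price p_j.\<close>
definition async_schedule :: "('g \<Rightarrow> nat \<Rightarrow> real) \<Rightarrow> bool" where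
  "async_schedule s \<longleftrightarrow>
     (\<forall>j. 0 \<le> s j 0 \<and> s j 0 \<le> 1) \<and>
     (\<forall>j k. s j k < s j (Suc k) \<and> s j (Suc k) \<le> s j k + 1) \<and>
     (\<forall>j. filterlim (s j) at_top sequentially) \<and>
     (\<forall>j j' k k'. j \<noteq> j' \<longrightarrow> s j k \<noteq> s j' k')"

text \<open>Previous update time tau_j of the k-th update of p_j (0 if none).\<close>
definition prev_update :: "('g \<Rightarrow> nat \<Rightarrow> real) \<Rightarrow> 'g \<Rightarrow> nat \<Rightarrow> real" where
  "prev_update s j k = (if k = 0 then 0 else s j (k - 1))"

text \<open>a j 0 is the initial price of good j, a j (Suc k) its value just after the k-th
  update.  price_at s a j t is p_j^t, the value just before any update at time t.\<close>
definition price_at :: "('g \<Rightarrow> nat \<Rightarrow> real) \<Rightarrow> ('g \<Rightarrow> nat \<Rightarrow> real) \<Rightarrow> 'g \<Rightarrow> real \<Rightarrow> real" where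
  "price_at s a j t = a j (card {k. s j k < t})"

definition price_vec :: "('g \<Rightarrow> nat \<Rightarrow> real) \<Rightarrow> ('g \<Rightarrow> nat \<Rightarrow> real) \<Rightarrow> real \<Rightarrow> 'g \<Rightarrow> real" where
  "price_vec s a t = (\<lambda>j. price_at s a j t)"

text \<open>Asynchronous tatonnement run: zt j k is the value tilde-z_j used at the k-th update
  of p_j; it lies between the minimum and maximum of z_j(p^{t'}) over t' in (tau_j, t]
  (i.e. between two attained values; the set of attained values is finite).\<close>
definition tatonnement_run ::
  "(('g \<Rightarrow> real) \<Rightarrow> 'b::finite \<Rightarrow> 'g \<Rightarrow> real) \<Rightarrow> ('g \<Rightarrow> nat \<Rightarrow> real) \<Rightarrow> ('g \<Rightarrow> nat \<Rightarrow> real)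
     \<Rightarrow> ('g \<Rightarrow> nat \<Rightarrow> real) \<Rightarrow> real \<Rightarrow> bool" where
  "tatonnement_run D s a zt lam \<longleftrightarrow>
     (\<forall>j k.
        (prev_update s j k < s j k \<longrightarrow>
           (\<exists>t1 t2. t1 \<in> {prev_update s j k<..s j k} \<and> t2 \<in> {prev_update s j k<..s j k} \<and>
              excess_demand D (price_vec s a t1) j \<le> zt j k \<and>
              zt j k \<le> excess_demand D (price_vec s a t2) j)) \<and>
        a j (Suc k) = a j k * (1 + lam * min (zt j k) 1 * (s j k - prev_update s j k)))"

end

theory Submission
  imports Defs
begin

text \<open>
  The function Phi(p) = sum_j p_j - sum_i e_i ln (sum_{j in S_i} p_j / b_ij) is convex with gradient
  -z(p).  An update p_j <- p_j (1 + lam m dt), m = min(tilde z_j, 1), therefore lowers Phi by about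
  lam dt p_j m tilde z_j.  The second-order remainder and the error from tilde z_j being a stale
  excess demand are both O(lam^2) times such progress terms, because within one time unit every
  price moves by a factor of at most 1 +- 2 lam; so for small lam, Phi drops by at least half the
  progress.  Since Phi is at least half the total price minus a constant, prices stay bounded and
  the total progress is finite.  With B a price bound, the price change over a unit window is at
  most lam (2 d B + (progress made in the window) / d) for every d > 0; the progress made in late
  windows tends to 0, so choosing d small makes the change arbitrarily small.
\<close>

lemma ln_one_plus_ge_quadratic:
  fixes y :: real
  assumes "\<bar>y\<bar> \<le> 1/2"
  shows "y - 2 * y^2 \<le> ln (1 + y)"
proof (cases "0 \<le> y")
  case True
  then have "y - y^2 \<le> ln (1 + y)"
    using assms by (intro ln_one_plus_pos_lower_bound) auto
  moreover have "0 \<le> y^2" by simp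
  ultimately show ?thesis by linarith
next
  case False
  then have "- (-y) - 2 * (-y)^2 \<le> ln (1 - (-y))"
    using assms by (intro ln_one_minus_pos_lower_bound) auto
  then show ?thesis by simp
qed

lemma abs_le_add_square_div:
  fixes m d :: real
  assumes "0 < d"
  shows "\<bar>m\<bar> \<le> d + m^2 / d"
proof (cases "\<bar>m\<bar> \<le> d")
  case True
  then show ?thesis using assms by (simp add: add_increasing2)
next
  case False
  then have "\<bar>m\<bar> * d \<le> \<bar>m\<bar> * \<bar>m\<bar>" by (intro mult_left_mono) auto
  then have "\<bar>m\<bar> \<le> m^2 / d" using assms by (simp add: field_simps power2_eq_square)
  then show ?thesis using assms by linarith
qed

lemma sum_le_if_subsingleton:
  fixes f :: "'a \<Rightarrow> real"
  assumes "\<And>x y. x \<in> A \<Longrightarrow> y \<in> A \<Longrightarrow> x = y" and "\<And>x. x \<in> A \<Longrightarrow> f x \<le> c" and "0 \<le> c"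
  shows "sum f A \<le> c"
proof (cases "A = {}")
  case False
  then obtain x where "x \<in> A" by blast
  with assms(1) have "A = {x}" by blast
  with assms(2) show ?thesis by simp
qed (use assms(3) in simp)

section \<open>Leontief buyers\<close>

locale leontief_market =
  fixes e :: "'b::finite \<Rightarrow> real" and S :: "'b \<Rightarrow> 'g::finite set"
    and b :: "'b \<Rightarrow> 'g \<Rightarrow> real"
    and D :: "('g \<Rightarrow> real) \<Rightarrow> 'b \<Rightarrow> 'g \<Rightarrow> real"
  assumes market: "leontief_fisher_market e S b"
    and demand: "is_leontief_demand e S b D"
begin

abbreviation pos_prices :: "('g \<Rightarrow> real) \<Rightarrow> bool" where
  "pos_prices P \<equiv> \<forall>j. 0 < P j"

lemma budget_pos: "0 < e i"
  and S_nonempty: "S i \<noteq> {}"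
  and b_pos: "j \<in> S i \<Longrightarrow> 0 < b i j"
  using market unfolding leontief_fisher_market_def by auto

text \<open>unit_cost P i is the price of one unit of utility for buyer i; a Leontief buyer spends
  the share (P j / b i j) / unit_cost P i of her budget on good j.\<close>

definition unit_cost :: "('g \<Rightarrow> real) \<Rightarrow> 'b \<Rightarrow> real" where
  "unit_cost P i = (\<Sum>j\<in>S i. P j / b i j)"

definition share :: "('g \<Rightarrow> real) \<Rightarrow> 'b \<Rightarrow> 'g \<Rightarrow> real" where
  "share P i j = (if j \<in> S i then (P j / b i j) / unit_cost P i else 0)"

definition spending :: "('g \<Rightarrow> real) \<Rightarrow> 'g \<Rightarrow> real" where
  "spending P j = (\<Sum>i\<in>UNIV. e i * share P i j)"

definition joint_spending :: "('g \<Rightarrow> real) \<Rightarrow> 'g \<Rightarrow> 'g \<Rightarrow> real" where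
  "joint_spending P j k = (\<Sum>i\<in>UNIV. e i * share P i j * share P i k)"

text \<open>The convex potential whose gradient is minus the excess demand.\<close>

definition potential :: "('g \<Rightarrow> real) \<Rightarrow> real" where
  "potential P = (\<Sum>j\<in>UNIV. P j) - (\<Sum>i\<in>UNIV. e i * ln (unit_cost P i))"

lemma unit_cost_pos: "pos_prices P \<Longrightarrow> 0 < unit_cost P i"
proof -
  assume P: "pos_prices P"
  obtain j where j: "j \<in> S i" using S_nonempty by blast
  have "0 < P j / b i j" using P b_pos[OF j] by simp
  also have "\<dots> \<le> unit_cost P i" unfolding unit_cost_def
    by (rule member_le_sum) (use j P b_pos in \<open>auto intro: less_imp_le\<close>)
  finally show ?thesis .
qed

lemma share_nonneg: "pos_prices P \<Longrightarrow> 0 \<le> share P i j"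
  using unit_cost_pos[of P i] b_pos[of j i]
  by (auto simp: share_def intro!: divide_nonneg_pos less_imp_le)

lemma sum_share: "pos_prices P \<Longrightarrow> (\<Sum>j\<in>UNIV. share P i j) = 1"
proof -
  assume P: "pos_prices P"
  have "(\<Sum>j\<in>UNIV. share P i j) = (\<Sum>j\<in>S i. (P j / b i j) / unit_cost P i)"
    unfolding share_def by (simp add: sum.If_cases)
  also have "\<dots> = unit_cost P i / unit_cost P i"
    unfolding unit_cost_def by (rule sum_divide_distrib[symmetric])
  also have "\<dots> = 1" using unit_cost_pos[OF P, of i] by simp
  finally show ?thesis .
qed

lemma share_le_1: "pos_prices P \<Longrightarrow> share P i j \<le> 1"
  using member_le_sum[of j UNIV "share P i"] by (simp add: share_nonneg sum_share)

lemma spending_nonneg: "pos_prices P \<Longrightarrow> 0 \<le> spending P j"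
  unfolding spending_def
  by (intro sum_nonneg mult_nonneg_nonneg) (auto simp: share_nonneg budget_pos less_imp_le)

lemma joint_spending_nonneg: "pos_prices P \<Longrightarrow> 0 \<le> joint_spending P j k"
  unfolding joint_spending_def
  by (intro sum_nonneg mult_nonneg_nonneg) (auto simp: share_nonneg budget_pos less_imp_le)

lemma sum_joint_spending: "pos_prices P \<Longrightarrow> (\<Sum>j\<in>UNIV. joint_spending P j k) = spending P k"
proof -
  assume P: "pos_prices P"
  have "(\<Sum>j\<in>UNIV. joint_spending P j k)
      = (\<Sum>i\<in>UNIV. e i * share P i k * (\<Sum>j\<in>UNIV. share P i j))"
    unfolding joint_spending_def by (subst sum.swap) (simp add: sum_distrib_left mult_ac)
  then show ?thesis using sum_share[OF P] by (simp add: spending_def)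
qed

definition optimal_bundle :: "('g \<Rightarrow> real) \<Rightarrow> 'b \<Rightarrow> 'g \<Rightarrow> real" where
  "optimal_bundle P i j = (if j \<in> S i then e i / (b i j * unit_cost P i) else 0)"

lemma optimal_bundle_eq: "pos_prices P \<Longrightarrow> optimal_bundle P i j = e i * share P i j / P j"
  using unit_cost_pos[of P i] by (auto simp: optimal_bundle_def share_def field_simps less_le)

lemma cost_optimal_bundle:
  assumes P: "pos_prices P"
  shows "(\<Sum>j\<in>UNIV. P j * optimal_bundle P i j) = e i"
proof -
  have "(\<Sum>j\<in>UNIV. P j * optimal_bundle P i j) = (\<Sum>j\<in>UNIV. e i * share P i j)"
    using P by (intro sum.cong) (auto simp: optimal_bundle_eq less_le)
  also have "\<dots> = e i" using sum_share[OF P, of i] by (simp add: sum_distrib_left[symmetric])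
  finally show ?thesis .
qed

lemma optimal_bundle_affordable: "pos_prices P \<Longrightarrow> affordable P (e i) (optimal_bundle P i)"
  unfolding affordable_def cost_optimal_bundle
  using budget_pos[of i] b_pos[of _ i] unit_cost_pos[of P i]
  by (auto simp: optimal_bundle_def less_imp_le)

lemma util_optimal_bundle:
  "pos_prices P \<Longrightarrow> leontief_util S b i (optimal_bundle P i) = e i / unit_cost P i"
proof -
  assume "pos_prices P"
  have "(\<lambda>j. b i j * optimal_bundle P i j) ` S i = (\<lambda>j. e i / unit_cost P i) ` S i"
    using b_pos[of _ i] by (intro image_cong) (auto simp: optimal_bundle_def less_le)
  also have "\<dots> = {e i / unit_cost P i}" using S_nonempty[of i] by auto
  finally show ?thesis by (simp add: leontief_util_def)
qed

text \<open>Any bundle reaching utility e i / unit_cost P i dominates the optimal bundle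
  componentwise, and the budget then forces equality.\<close>

lemma demand_eq_optimal_bundle:
  assumes P: "pos_prices P"
  shows "D P i j = optimal_bundle P i j"
proof -
  let ?y = "optimal_bundle P i"
  have "demand_bundle (leontief_util S b i) P (e i) (D P i)"
    using demand P unfolding is_leontief_demand_def by blast
  then have affD: "affordable P (e i) (D P i)"
    and "leontief_util S b i ?y \<le> leontief_util S b i (D P i)"
    using optimal_bundle_affordable[OF P] unfolding demand_bundle_def by auto
  then have util: "e i / unit_cost P i \<le> b i k * D P i k" if "k \<in> S i" for k
  proof -
    have "leontief_util S b i (D P i) \<le> b i k * D P i k"
      unfolding leontief_util_def using that by (intro Min_le) auto
    then show ?thesis using \<open>leontief_util S b i ?y \<le> _\<close> util_optimal_bundle[OF P] by simp
  qed
  have dom: "0 \<le> P k * (D P i k - ?y k)" for k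
  proof -
    have "?y k \<le> D P i k"
    proof (cases "k \<in> S i")
      case True
      have "e i / (b i k * unit_cost P i) = (e i / unit_cost P i) / b i k"
        by (simp add: mult.commute)
      also have "\<dots> \<le> D P i k"
        using util[OF True]
        by (subst pos_divide_le_eq[OF b_pos[OF True]]) (simp add: mult.commute)
      finally show ?thesis using True by (simp add: optimal_bundle_def)
    qed (use affD in \<open>simp add: optimal_bundle_def affordable_def\<close>)
    then show ?thesis using P[rule_format, of k] by simp
  qed
  have "(\<Sum>k\<in>UNIV. P k * (D P i k - ?y k)) \<le> 0"
    using affD cost_optimal_bundle[OF P]
    by (simp add: affordable_def right_diff_distrib sum_subtractf)
  then have "\<forall>k\<in>UNIV. P k * (D P i k - ?y k) = 0"
    using dom sum_nonneg_eq_0_iff[of UNIV "\<lambda>k. P k * (D P i k - ?y k)"]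
    by (simp add: sum_nonneg order_antisym)
  then have "P j * (D P i j - ?y j) = 0" by blast
  then show ?thesis using P[rule_format, of j] by simp
qed

lemma excess_demand_eq: "pos_prices P \<Longrightarrow> excess_demand D P j = spending P j / P j - 1"
  by (simp add: excess_demand_def demand_eq_optimal_bundle optimal_bundle_eq spending_def
      sum_divide_distrib)

lemma excess_demand_ge: "pos_prices P \<Longrightarrow> -1 \<le> excess_demand D P j"
  using spending_nonneg[of P j] by (simp add: excess_demand_eq less_imp_le)

lemma unit_cost_update:
  assumes P: "pos_prices P"
  shows "unit_cost (P(j := P j * (1 + r))) i = unit_cost P i * (1 + share P i j * r)"
proof (cases "j \<in> S i")
  case True
  have "unit_cost (P(j := P j * (1 + r))) i
      = (\<Sum>k\<in>S i. P k / b i k + (if k = j then P j * r / b i k else 0))"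
    unfolding unit_cost_def by (intro sum.cong) (auto simp: algebra_simps add_divide_distrib)
  also have "\<dots> = unit_cost P i + P j * r / b i j"
    using True by (simp add: sum.distrib unit_cost_def)
  also have "\<dots> = unit_cost P i * (1 + share P i j * r)"
    using True unit_cost_pos[OF P, of i] by (simp add: share_def field_simps)
  finally show ?thesis .
next
  case False
  then have "unit_cost (P(j := P j * (1 + r))) i = unit_cost P i"
    unfolding unit_cost_def by (intro sum.cong) auto
  then show ?thesis using False by (simp add: share_def)
qed

text \<open>First-order change of the potential is r P j (1 - spending P j / P j), i.e. minus
  the excess demand; the quadratic remainder comes from the lower bound on ln.\<close>

lemma potential_update_le:
  assumes P: "pos_prices P" and r: "\<bar>r\<bar> \<le> 1/2"
  shows "potential (P(j := P j * (1 + r))) - potential P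
           \<le> r * P j - r * spending P j + 2 * r^2 * spending P j"
proof -
  define P' where "P' = P(j := P j * (1 + r))"
  have sum_P': "(\<Sum>k\<in>UNIV. P' k) = (\<Sum>k\<in>UNIV. P k) + r * P j"
  proof -
    have "(\<Sum>k\<in>UNIV. P' k) = (\<Sum>k\<in>UNIV. P k + (if k = j then r * P j else 0))"
      unfolding P'_def by (intro sum.cong) (auto simp: algebra_simps)
    then show ?thesis by (simp add: sum.distrib)
  qed
  have buyer: "e i * ln (unit_cost P i) + e i * (r * share P i j) - 2 * r^2 * (e i * share P i j)
      \<le> e i * ln (unit_cost P' i)" for i
  proof -
    let ?x = "share P i j"
    have x: "0 \<le> ?x" "?x \<le> 1" using share_nonneg[OF P] share_le_1[OF P] by auto
    have "\<bar>?x * r\<bar> \<le> \<bar>r\<bar>" using x by (simp add: abs_mult mult_left_le_one_le)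
    then have xr: "\<bar>?x * r\<bar> \<le> 1/2" using r by linarith
    then have "0 < 1 + ?x * r" by (simp add: abs_le_iff)
    then have "ln (unit_cost P' i) = ln (unit_cost P i) + ln (1 + ?x * r)"
      unfolding P'_def using unit_cost_update[OF P] unit_cost_pos[OF P, of i] by (simp add: ln_mult)
    moreover have "?x * r - 2 * (?x * r)^2 \<le> ln (1 + ?x * r)"
      by (rule ln_one_plus_ge_quadratic[OF xr])
    moreover have "(?x * r)^2 \<le> r^2 * ?x"
    proof -
      have "?x * ?x \<le> ?x" using x by (simp add: mult_left_le_one_le)
      then have "r^2 * (?x * ?x) \<le> r^2 * ?x" by (simp add: mult_left_mono)
      then show ?thesis by (simp add: power2_eq_square mult_ac)
    qed
    ultimately have "ln (unit_cost P i) + ?x * r - 2 * (r^2 * ?x) \<le> ln (unit_cost P' i)"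
      by linarith
    then have "e i * (ln (unit_cost P i) + ?x * r - 2 * (r^2 * ?x)) \<le> e i * ln (unit_cost P' i)"
      using budget_pos[of i] by (simp add: mult_left_mono)
    then show ?thesis by (simp add: algebra_simps)
  qed
  have "(\<Sum>i\<in>UNIV. e i * ln (unit_cost P i)
      + e i * (r * share P i j) - 2 * r^2 * (e i * share P i j))
      \<le> (\<Sum>i\<in>UNIV. e i * ln (unit_cost P' i))"
    by (rule sum_mono) (rule buyer)
  then have "(\<Sum>i\<in>UNIV. e i * ln (unit_cost P i)) + r * spending P j - 2 * r^2 * spending P j
      \<le> (\<Sum>i\<in>UNIV. e i * ln (unit_cost P' i))"
    by (simp add: sum.distrib sum_subtractf spending_def sum_distrib_left algebra_simps)
  then show ?thesis unfolding potential_def P'_def[symmetric] using sum_P' by linarith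
qed

lemma unit_cost_mono_scaled:
  assumes "\<And>k. c * P k \<le> Q k"
  shows "c * unit_cost P i \<le> unit_cost Q i"
proof -
  have "c * unit_cost P i = (\<Sum>k\<in>S i. (c * P k) / b i k)"
    unfolding unit_cost_def by (simp add: sum_distrib_left)
  also have "\<dots> \<le> unit_cost Q i" unfolding unit_cost_def
    using assms b_pos by (intro sum_mono divide_right_mono) (auto intro: less_imp_le)
  finally show ?thesis .
qed

lemma share_le_scaled:
  assumes P: "pos_prices P" and Q: "pos_prices Q" and c: "0 < c" "\<And>k. c * P k \<le> Q k"
  shows "share Q i j \<le> (Q j / P j) * share P i j / c"
proof (cases "j \<in> S i")
  case True
  have LP: "0 < unit_cost P i" using unit_cost_pos[OF P] .
  have "share Q i j = (Q j / b i j) / unit_cost Q i" using True by (simp add: share_def)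
  also have "\<dots> \<le> (Q j / b i j) / (c * unit_cost P i)"
    using unit_cost_mono_scaled[of c P Q i] c LP unit_cost_pos[OF Q, of i] b_pos[OF True]
      Q[rule_format, of j]
    by (intro divide_left_mono) (auto intro!: divide_nonneg_pos less_imp_le)
  also have "\<dots> = (Q j / P j) * share P i j / c"
    using True P[rule_format, of j] c LP by (simp add: share_def field_simps)
  finally show ?thesis .
qed (simp add: share_def)

lemma share_le_comparable:
  assumes P: "pos_prices P" and Q: "pos_prices Q"
    and c: "0 < c" "\<And>k. c * P k \<le> Q k" "\<And>k. c * Q k \<le> P k"
  shows "share Q i j \<le> share P i j / c^2"
proof -
  have "Q j / P j \<le> 1 / c"
    using c(3)[of j] c(1) P[rule_format, of j] by (simp add: field_simps mult.commute)
  then have "(Q j / P j) * share P i j / c \<le> (1 / c) * share P i j / c"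
    using share_nonneg[OF P] c(1) by (intro divide_right_mono mult_right_mono) auto
  with share_le_scaled[OF P Q c(1,2)] have "share Q i j \<le> (1 / c) * share P i j / c"
    by (rule order.trans)
  then show ?thesis by (simp add: power2_eq_square)
qed

lemma spending_le_scaled:
  assumes P: "pos_prices P" and Q: "pos_prices Q" and c: "0 < c" "\<And>k. c * P k \<le> Q k"
    and eq: "Q j = P j"
  shows "c * spending Q j \<le> spending P j"
proof -
  have "c * share Q i j \<le> share P i j" for i
    using share_le_scaled[OF P Q c, of i j] eq P[rule_format, of j] c(1)
    by (simp add: field_simps)
  then have "(\<Sum>i\<in>UNIV. e i * (c * share Q i j)) \<le> spending P j"
    unfolding spending_def using budget_pos
      by (intro sum_mono mult_left_mono) (auto intro: less_imp_le)
  then show ?thesis by (simp add: spending_def sum_distrib_left algebra_simps)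
qed

text \<open>Raising the price of k moves the spending on another good j only through the buyers
  who want both goods.\<close>

lemma spending_change_other_good:
  assumes P: "pos_prices P" and kj: "k \<noteq> j" and q: "0 < q" and r: "\<bar>r\<bar> \<le> 1 - q"
  shows "\<bar>spending (P(k := P k * (1 + r))) j - spending P j\<bar> \<le> \<bar>r\<bar> * joint_spending P j k / q"
proof -
  define P' where "P' = P(k := P k * (1 + r))"
  have buyer: "\<bar>share P' i j - share P i j\<bar> \<le> \<bar>r\<bar> * (share P i j * share P i k) / q" for i
  proof (cases "j \<in> S i")
    case True
    have x: "0 \<le> share P i k" "share P i k \<le> 1" using share_nonneg[OF P] share_le_1[OF P] by auto
    define u where "u = 1 + share P i k * r"
    have "\<bar>share P i k * r\<bar> \<le> \<bar>r\<bar>" using x by (simp add: abs_mult mult_left_le_one_le)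
    then have u: "q \<le> u" using r abs_le_D2 unfolding u_def by fastforce
    have "unit_cost P' i = unit_cost P i * u" unfolding P'_def u_def
      by (rule unit_cost_update[OF P])
    then have "share P' i j = share P i j / u"
      using True kj u q unit_cost_pos[OF P, of i] unfolding P'_def
        by (simp add: share_def field_simps)
    then have "share P' i j - share P i j = - (share P i j * (share P i k * r)) / u"
      using u q unfolding u_def by (simp add: field_simps)
    then have "\<bar>share P' i j - share P i j\<bar> = share P i j * share P i k * \<bar>r\<bar> / u"
      using u q share_nonneg[OF P] by (simp add: abs_mult)
    also have "\<dots> \<le> share P i j * share P i k * \<bar>r\<bar> / q"
      using u q share_nonneg[OF P] by (intro divide_left_mono mult_nonneg_nonneg) auto
    finally show ?thesis by (simp add: algebra_simps)
  qed (use share_nonneg[OF P] q in \<open>simp add: share_def\<close>)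
  have "\<bar>spending P' j - spending P j\<bar> = \<bar>\<Sum>i\<in>UNIV. e i * (share P' i j - share P i j)\<bar>"
    by (simp add: spending_def sum_subtractf algebra_simps)
  also have "\<dots> \<le> (\<Sum>i\<in>UNIV. e i * (\<bar>r\<bar> * (share P i j * share P i k) / q))"
    using buyer budget_pos
    by (intro order.trans[OF sum_abs] sum_mono)
       (metis abs_mult abs_of_pos mult_left_mono less_imp_le)
  also have "\<dots> = \<bar>r\<bar> * joint_spending P j k / q"
    by (simp add: joint_spending_def sum_distrib_left sum_divide_distrib algebra_simps)
  finally show ?thesis unfolding P'_def .
qed

lemma unit_cost_le_total:
  assumes P: "pos_prices P" and c: "\<And>j. j \<in> S i \<Longrightarrow> 1 / b i j \<le> c"
  shows "unit_cost P i \<le> c * (\<Sum>j\<in>UNIV. P j)"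
proof -
  obtain j0 where j0: "j0 \<in> S i" using S_nonempty by blast
  then have "0 < 1 / b i j0" using b_pos by simp
  then have c0: "0 \<le> c" using c[OF j0] by linarith
  have "unit_cost P i \<le> (\<Sum>j\<in>S i. P j * c)"
    unfolding unit_cost_def
  proof (rule sum_mono)
    fix j assume j: "j \<in> S i"
    have "P j / b i j = P j * (1 / b i j)" by simp
    also have "\<dots> \<le> P j * c" using c[OF j] P by (intro mult_left_mono) (auto intro: less_imp_le)
    finally show "P j / b i j \<le> P j * c" .
  qed
  also have "\<dots> \<le> (\<Sum>j\<in>UNIV. P j * c)"
    using P c0 by (intro sum_mono2) (auto intro: mult_nonneg_nonneg less_imp_le)
  finally show ?thesis by (simp add: sum_distrib_left mult.commute)
qed

text \<open>The logarithmic part of the potential is at most half the total price plus a constant,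
  by ln t \<le> ln (2 E) + t / (2 E) - 1 for the total budget E.\<close>

lemma potential_coercive: "\<exists>C. \<forall>P. pos_prices P \<longrightarrow> (\<Sum>j\<in>UNIV. P j) / 2 - C \<le> potential P"
proof -
  define E where "E = (\<Sum>i\<in>UNIV. e i)"
  define B where "B = (\<Sum>i\<in>UNIV. \<Sum>j\<in>S i. 1 / b i j)"
  have E: "0 < E" unfolding E_def by (rule sum_pos) (auto simp: budget_pos)
  have inv_b: "1 / b i j \<le> B" if "j \<in> S i" for i j
  proof -
    have "1 / b i j \<le> (\<Sum>j\<in>S i. 1 / b i j)"
      by (rule member_le_sum) (use that b_pos in \<open>auto intro: less_imp_le\<close>)
    also have "\<dots> \<le> B" unfolding B_def
      by (rule member_le_sum) (auto intro!: sum_nonneg simp: b_pos less_imp_le)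
    finally show ?thesis .
  qed
  have "(\<Sum>j\<in>UNIV. P j) / 2 - (E * ln B + E * ln (2 * E) - E) \<le> potential P"
    if P: "pos_prices P" for P
  proof -
    define T where "T = (\<Sum>j\<in>UNIV. P j)"
    have T: "0 < T" unfolding T_def by (rule sum_pos) (auto simp: P)
    have cost: "0 < unit_cost P i" "unit_cost P i \<le> B * T" for i
      using unit_cost_pos[OF P] unit_cost_le_total[OF P inv_b] by (auto simp: T_def)
    then have "0 < B * T" by (meson less_le_trans)
    then have B: "0 < B" using T by (simp add: zero_less_mult_iff)
    have "ln (unit_cost P i) \<le> ln (B * T)" for i using cost B T by simp
    then have "ln (unit_cost P i) \<le> ln B + ln T" for i using B T by (simp add: ln_mult)
    moreover have "ln T \<le> ln (2 * E) + T / (2 * E) - 1"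
      using ln_le_minus_one[of "T / (2 * E)"] T E by (simp add: ln_div)
    ultimately have "ln (unit_cost P i) \<le> ln B + ln (2 * E) + T / (2 * E) - 1" for i
      by (smt (verit))
    then have "e i * ln (unit_cost P i) \<le> e i * (ln B + ln (2 * E) + T / (2 * E) - 1)" for i
      using budget_pos[of i] by (intro mult_left_mono) (auto intro: less_imp_le)
    then have "(\<Sum>i\<in>UNIV. e i * ln (unit_cost P i)) \<le> E * (ln B + ln (2 * E) + T / (2 * E) - 1)"
      unfolding E_def sum_distrib_right by (rule sum_mono)
    also have "\<dots> = E * ln B + E * ln (2 * E) - E + T / 2" using E by (simp add: field_simps)
    finally show ?thesis unfolding potential_def T_def by simp
  qed
  then show ?thesis by blast
qed

end

section \<open>Asynchronous update schedules\<close>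

locale update_schedule =
  fixes s :: "'g::finite \<Rightarrow> nat \<Rightarrow> real"
  assumes schedule: "async_schedule s"
begin

lemma update_time_less_Suc: "s j k < s j (Suc k)"
  and update_gap: "s j (Suc k) \<le> s j k + 1"
  and first_update: "0 \<le> s j 0" "s j 0 \<le> 1"
  and update_times_unbounded: "filterlim (s j) at_top sequentially"
  and updates_distinct: "j \<noteq> j' \<Longrightarrow> s j k \<noteq> s j' k'"
  using schedule unfolding async_schedule_def by auto

lemma strict_mono_update_time: "strict_mono (s j)"
  by (simp add: strict_mono_Suc_iff update_time_less_Suc)

lemma update_time_less_iff: "s j k < s j k' \<longleftrightarrow> k < k'"
  using strict_mono_update_time by (simp add: strict_mono_less)

lemma update_time_le_iff: "s j k \<le> s j k' \<longleftrightarrow> k \<le> k'"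
  using strict_mono_update_time by (simp add: strict_mono_less_eq)

lemma update_time_nonneg: "0 \<le> s j k"
  using first_update(1)[of j] update_time_le_iff[of j 0 k] by linarith

lemma finite_updates_before_time: "finite {k. s j k < t}"
proof -
  obtain K where K: "\<And>k. k \<ge> K \<Longrightarrow> t \<le> s j k"
    using update_times_unbounded[of j]
    by (auto simp: filterlim_at_top eventually_sequentially)
  have "{k. s j k < t} \<subseteq> {..<K}" using K by (force simp: not_less[symmetric])
  then show ?thesis by (rule finite_subset) simp
qed

definition num_updates :: "'g \<Rightarrow> real \<Rightarrow> nat" where
  "num_updates j t = card {k. s j k < t}"

lemma updates_before_eq: "{k. s j k < t} = {..<num_updates j t}"
proof (cases "{k. s j k < t} = {}")
  case False
  define M where "M = Max {k. s j k < t}"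
  have M: "s j M < t" "\<And>k. s j k < t \<Longrightarrow> k \<le> M"
    using Max_in[OF finite_updates_before_time False] Max_ge[OF finite_updates_before_time]
    unfolding M_def by auto
  have "s j k < t" if "k \<le> M" for k
    using M(1) that update_time_le_iff[of j k M] by linarith
  then have "{k. s j k < t} = {..<Suc M}" using M(2) by (auto simp: less_Suc_eq_le)
  then show ?thesis by (simp add: num_updates_def)
qed (simp add: num_updates_def)

lemma update_before_iff: "s j k < t \<longleftrightarrow> k < num_updates j t"
  using updates_before_eq[of j t] by blast

lemma num_updates_update_time: "num_updates j (s j q) = q"
proof -
  have "{k. s j k < s j q} = {..<q}" by (auto simp: update_time_less_iff)
  then show ?thesis by (simp add: num_updates_def)
qed

lemma num_updates_mono: "t \<le> t' \<Longrightarrow> num_updates j t \<le> num_updates j t'"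
  by (metis update_before_iff dual_order.strict_trans2 leI less_irrefl)

lemma price_at_eq: "price_at s a j t = a j (num_updates j t)"
  by (simp add: price_at_def num_updates_def)

lemma price_vec_eq: "price_vec s a t j = a j (num_updates j t)"
  by (simp add: price_vec_def price_at_eq)

definition elapsed :: "'g \<Rightarrow> nat \<Rightarrow> real" where
  "elapsed j q = s j q - prev_update s j q"

lemma prev_update_Suc: "prev_update s j (Suc q) = s j q"
  by (simp add: prev_update_def)

lemma elapsed_eq_diff: "elapsed j q = prev_update s j (Suc q) - prev_update s j q"
  by (simp add: elapsed_def prev_update_Suc)

lemma elapsed_nonneg: "0 \<le> elapsed j q"
  by (cases q) (auto simp: elapsed_def prev_update_def update_time_nonneg less_imp_le[OF update_time_less_Suc])

lemma elapsed_le_1: "elapsed j q \<le> 1"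
  using first_update(2)[of j] update_gap[of j]
  by (cases q) (auto simp: elapsed_def prev_update_def add.commute diff_le_eq)

lemma prev_update_le: "prev_update s j q \<le> s j q"
  using elapsed_nonneg by (simp add: elapsed_def)

lemma num_updates_eq_if_window:
  assumes "prev_update s j q < t" "t \<le> s j q"
  shows "num_updates j t = q"
proof -
  have "s j k < t \<longleftrightarrow> k < q" for k
  proof
    assume "s j k < t"
    with assms(2) have "s j k < s j q" by linarith
    then show "k < q" by (simp add: update_time_less_iff)
  next
    assume "k < q"
    then obtain c where "q = Suc c" "k \<le> c" by (cases q) auto
    with assms(1) show "s j k < t"
      using update_time_le_iff[of j k c] by (simp add: prev_update_Suc)
  qed
  then show ?thesis using update_before_iff[of j _ t] by (metis nat_neq_iff)
qed

lemma price_vec_in_window: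
  "prev_update s j q < t \<Longrightarrow> t \<le> s j q \<Longrightarrow> price_vec s a t j = a j q"
  by (simp add: price_vec_eq num_updates_eq_if_window)

text \<open>Updates of one price are at most one time unit apart, so the updates of p_j counted
  in a time window cover at most one unit more than the window itself.\<close>

lemma sum_elapsed_window:
  assumes "ta \<le> tb"
  shows "(\<Sum>q\<in>{num_updates j ta..<num_updates j tb}. elapsed j q) \<le> tb - ta + 1"
proof (cases "num_updates j ta < num_updates j tb")
  case True
  define N where "N = num_updates j ta"
  obtain c where c: "num_updates j tb = Suc c" using True by (cases "num_updates j tb") auto
  have "(\<Sum>q\<in>{N..<Suc c}. elapsed j q) = prev_update s j (Suc c) - prev_update s j N"
    using True unfolding elapsed_eq_diff N_def c by (intro sum_Suc_diff') simp
  moreover have "prev_update s j (Suc c) < tb"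
    using update_before_iff[of j c tb] c by (simp add: prev_update_Suc)
  moreover have "ta - 1 \<le> prev_update s j N"
  proof (cases N)
    case 0
    then have "\<not> s j 0 < ta" using update_before_iff[of j 0 ta] N_def by simp
    then show ?thesis using first_update(2)[of j] 0 by (simp add: prev_update_def)
  next
    case (Suc c')
    then have "\<not> s j N < ta" using update_before_iff[of j N ta] N_def by simp
    then show ?thesis using update_gap[of j c'] Suc by (simp add: prev_update_Suc)
  qed
  ultimately show ?thesis using c by (simp add: N_def)
qed (use assms in simp)

text \<open>An event (j, q) is the q-th update of p_j.  The price vector changes only at events,
  one coordinate at a time, so quantities of the price vector telescope over events.\<close>

definition event_time :: "'g \<times> nat \<Rightarrow> real" where
  "event_time ev = s (fst ev) (snd ev)"

definition events_before :: "real \<Rightarrow> ('g \<times> nat) set" where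
  "events_before T = {ev. event_time ev < T}"

definition before :: "('g \<Rightarrow> nat \<Rightarrow> real) \<Rightarrow> 'g \<times> nat \<Rightarrow> 'g \<Rightarrow> real" where
  "before a ev = price_vec s a (event_time ev)"

definition after :: "('g \<Rightarrow> nat \<Rightarrow> real) \<Rightarrow> 'g \<times> nat \<Rightarrow> 'g \<Rightarrow> real" where
  "after a ev = (before a ev)(fst ev := a (fst ev) (Suc (snd ev)))"

lemma event_time_Pair [simp]: "event_time (j, q) = s j q"
  by (simp add: event_time_def)

lemma mem_events_before: "ev \<in> events_before T \<longleftrightarrow> event_time ev < T"
  by (simp add: events_before_def)

lemma finite_events_before: "finite (events_before T)"
proof -
  have "events_before T = Sigma UNIV (\<lambda>j. {q. s j q < T})"
    by (auto simp: events_before_def event_time_def)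
  then show ?thesis by (simp add: finite_updates_before_time)
qed

lemma events_before_mono: "T1 \<le> T2 \<Longrightarrow> events_before T1 \<subseteq> events_before T2"
  by (auto simp: mem_events_before)

lemma event_time_inj: "event_time ev = event_time ev' \<Longrightarrow> ev = ev'"
proof (cases ev, cases ev')
  fix j q j' q' assume "event_time ev = event_time ev'" "ev = (j, q)" "ev' = (j', q')"
  then show "ev = ev'"
    using updates_distinct[of j j' q q'] strict_mono_eq[OF strict_mono_update_time, of j q q']
    by (cases "j = j'") auto
qed

lemma before_Pair_self: "before a (j, q) j = a j q"
  by (simp add: before_def price_vec_eq num_updates_update_time)

lemma price_vec_no_events:
  assumes "events_before T = {}"
  shows "price_vec s a T = (\<lambda>j. a j 0)"
proof -
  have "num_updates j T = 0" for j
    using assms update_before_iff[of j 0 T] mem_events_before[of "(j, 0)" T] by auto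
  then show ?thesis by (simp add: fun_eq_iff price_vec_eq)
qed

lemma latest_event:
  assumes "events_before T \<noteq> {}"
  obtains ev where "ev \<in> events_before T"
    and "events_before (event_time ev) = events_before T - {ev}"
    and "price_vec s a T = after a ev"
proof -
  define ev where "ev = arg_min_on (\<lambda>x. - event_time x) (events_before T)"
  have ev: "ev \<in> events_before T"
    and max: "\<And>ev'. ev' \<in> events_before T \<Longrightarrow> event_time ev' \<le> event_time ev"
    using arg_min_if_finite[OF finite_events_before assms, of "\<lambda>x. - event_time x"]
    unfolding ev_def by (auto simp: not_less)
  have earlier: "event_time ev' < event_time ev" if "ev' \<in> events_before T" "ev' \<noteq> ev" for ev'
    using max[OF that(1)] event_time_inj[of ev' ev] that(2) by fastforce
  have evT: "event_time ev < T" using ev mem_events_before by blast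
  have events: "events_before (event_time ev) = events_before T - {ev}"
  proof (rule set_eqI)
    fix x
    show "x \<in> events_before (event_time ev) \<longleftrightarrow> x \<in> events_before T - {ev}"
      using earlier[of x] evT by (auto simp: mem_events_before)
  qed
  obtain j q where jq: "ev = (j, q)" by (cases ev)
  have "num_updates j T = Suc q"
  proof -
    have "s j k < T \<longleftrightarrow> k < Suc q" for k
      using max[of "(j, k)"] evT jq update_time_le_iff[of j k q]
      by (auto simp: mem_events_before less_Suc_eq_le)
    then show ?thesis using update_before_iff[of j _ T] by (metis nat_neq_iff)
  qed
  moreover have "num_updates k T = num_updates k (event_time ev)" if "k \<noteq> j" for k
  proof -
    have "s k k' < T \<longleftrightarrow> s k k' < event_time ev" for k'
      using earlier[of "(k, k')"] evT jq that by (auto simp: mem_events_before)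
    then show ?thesis by (simp add: num_updates_def)
  qed
  ultimately have "price_vec s a T = after a ev"
    by (auto simp: jq after_def before_def price_vec_eq)
  with ev events show thesis by (rule that)
qed

lemma telescoping_events:
  fixes G :: "('g \<Rightarrow> real) \<Rightarrow> real"
  shows "G (price_vec s a T)
           = G (\<lambda>j. a j 0) + (\<Sum>ev\<in>events_before T. G (after a ev) - G (before a ev))"
proof (induction "card (events_before T)" arbitrary: T)
  case 0
  then have "events_before T = {}" using finite_events_before by simp
  then show ?case by (simp add: price_vec_no_events)
next
  case (Suc n)
  then have "events_before T \<noteq> {}" by auto
  then obtain ev where ev: "ev \<in> events_before T"
    and events: "events_before (event_time ev) = events_before T - {ev}"
    and step: "price_vec s a T = after a ev"
    by (rule latest_event)
  have "n = card (events_before (event_time ev))"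
    using Suc.hyps(2) events ev finite_events_before by simp
  with Suc.hyps(1) have "G (before a ev)
      = G (\<lambda>j. a j 0) + (\<Sum>ev\<in>events_before (event_time ev). G (after a ev) - G (before a ev))"
    by (simp add: before_def)
  moreover have "(\<Sum>ev\<in>events_before T. G (after a ev) - G (before a ev))
      = (G (after a ev) - G (before a ev))
        + (\<Sum>ev\<in>events_before (event_time ev). G (after a ev) - G (before a ev))"
    using events ev finite_events_before by (simp add: sum.remove)
  ultimately show ?case using step by simp
qed

lemma telescoping_events_diff:
  fixes G :: "('g \<Rightarrow> real) \<Rightarrow> real"
  assumes "T1 \<le> T2"
  shows "G (price_vec s a T2) - G (price_vec s a T1)
           = (\<Sum>ev\<in>events_before T2 - events_before T1. G (after a ev) - G (before a ev))"
  using telescoping_events[of G a T1] telescoping_events[of G a T2]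
    sum.subset_diff[OF events_before_mono[OF assms] finite_events_before,
      of "\<lambda>ev. G (after a ev) - G (before a ev)"]
  by linarith

end

section \<open>Asynchronous tatonnement\<close>

locale tatonnement = leontief_market e S b D + update_schedule s
  for e :: "'b::finite \<Rightarrow> real" and S :: "'b \<Rightarrow> 'g::finite set" and b
    and D :: "('g \<Rightarrow> real) \<Rightarrow> 'b \<Rightarrow> 'g \<Rightarrow> real" and s :: "'g \<Rightarrow> nat \<Rightarrow> real" +
  fixes a :: "'g \<Rightarrow> nat \<Rightarrow> real" and zt :: "'g \<Rightarrow> nat \<Rightarrow> real" and lam :: real
  assumes lam_pos: "0 < lam" and lam_le: "lam \<le> 1 / 20"
    and initial_prices_pos: "\<forall>j. 0 < a j 0"
    and run: "tatonnement_run D s a zt lam"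
begin

abbreviation prices :: "real \<Rightarrow> 'g \<Rightarrow> real" where
  "prices t \<equiv> price_vec s a t"

definition clipped :: "'g \<Rightarrow> nat \<Rightarrow> real" where
  "clipped j q = min (zt j q) 1"

definition rel_change :: "'g \<Rightarrow> nat \<Rightarrow> real" where
  "rel_change j q = lam * clipped j q * elapsed j q"

lemma price_update: "a j (Suc q) = a j q * (1 + rel_change j q)"
  using run unfolding tatonnement_run_def rel_change_def clipped_def elapsed_def
  by (auto simp: mult.assoc)

lemma tilde_excess_between:
  assumes "prev_update s j q < s j q"
  obtains t1 t2 where "t1 \<in> {prev_update s j q<..s j q}" "t2 \<in> {prev_update s j q<..s j q}"
    and "excess_demand D (prices t1) j \<le> zt j q" "zt j q \<le> excess_demand D (prices t2) j"
  using run assms unfolding tatonnement_run_def by blast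

lemma elapsed_eq_0: "\<not> prev_update s j q < s j q \<Longrightarrow> elapsed j q = 0"
  using prev_update_le[of j q] by (simp add: elapsed_def)

lemma abs_rel_change: "\<bar>rel_change j q\<bar> = lam * \<bar>clipped j q\<bar> * elapsed j q"
  using lam_pos elapsed_nonneg[of j q] by (simp add: rel_change_def abs_mult)

lemma abs_rel_change_le_elapsed:
  assumes "prev_update s j q < s j q \<Longrightarrow> -1 \<le> zt j q"
  shows "\<bar>rel_change j q\<bar> \<le> lam * elapsed j q"
proof (cases "prev_update s j q < s j q")
  case True
  then have "\<bar>clipped j q\<bar> \<le> 1" using assms by (auto simp: clipped_def)
  then show ?thesis unfolding abs_rel_change
    using lam_pos elapsed_nonneg[of j q] by (simp add: mult_left_le_one_le mult.assoc)
qed (simp add: elapsed_eq_0 rel_change_def)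

lemma tilde_excess_ge_if_prices_pos:
  assumes "prev_update s j q < s j q"
    and "\<And>t. prev_update s j q < t \<Longrightarrow> t \<le> s j q \<Longrightarrow> pos_prices (prices t)"
  shows "-1 \<le> zt j q"
proof -
  obtain t1 where "t1 \<in> {prev_update s j q<..s j q}" "excess_demand D (prices t1) j \<le> zt j q"
    using tilde_excess_between[OF assms(1)] by blast
  then show ?thesis using excess_demand_ge assms(2) by (meson greaterThanAtMost_iff order.trans)
qed

text \<open>A price update multiplies the price by 1 + r with |r| \<le> lam < 1, provided the excess
  demands it was computed from are those of positive prices; induction over the events.\<close>

lemma prices_pos: "0 < prices T j"
proof (induction "card (events_before T)" arbitrary: T j rule: less_induct)
  case less
  show ?case
  proof (cases "events_before T = {}")
    case True
    then show ?thesis using initial_prices_pos by (simp add: price_vec_no_events)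
  next
    case False
    then obtain ev where ev: "ev \<in> events_before T"
      and events: "events_before (event_time ev) = events_before T - {ev}"
      and step: "prices T = after a ev"
      by (rule latest_event)
    obtain k q where kq: "ev = (k, q)" by (cases ev)
    have IH: "0 < prices t j'" if "t \<le> s k q" for t j'
    proof (rule less)
      have "card (events_before t) \<le> card (events_before (event_time ev))"
        using that kq by (intro card_mono finite_events_before events_before_mono) simp
      also have "\<dots> < card (events_before T)"
        using events ev finite_events_before by (metis card_Diff1_less)
      finally show "card (events_before t) < card (events_before T)" .
    qed
    have "\<bar>rel_change k q\<bar> \<le> lam * elapsed k q"
      using IH by (intro abs_rel_change_le_elapsed tilde_excess_ge_if_prices_pos) auto
    moreover have "lam * elapsed k q \<le> lam"
      using elapsed_le_1[of k q] lam_pos by (simp add: mult_left_le)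
    ultimately have "0 < 1 + rel_change k q" using lam_le by linarith
    moreover have "0 < a k q" using IH[of "s k q" k]
      by (simp add: price_vec_eq num_updates_update_time)
    ultimately have "0 < a k (Suc q)" by (simp add: price_update)
    then show ?thesis
      using IH[of "s k q" j] step kq by (cases "j = k") (auto simp: after_def before_def)
  qed
qed

lemma prices_pos_vec: "pos_prices (prices T)"
  by (simp add: prices_pos)

lemma price_pos: "0 < a j q"
  using prices_pos[of "s j q" j] by (simp add: price_vec_eq num_updates_update_time)

lemma tilde_excess_ge: "prev_update s j q < s j q \<Longrightarrow> -1 \<le> zt j q"
  using tilde_excess_ge_if_prices_pos prices_pos_vec by blast

lemma abs_rel_change_le: "\<bar>rel_change j q\<bar> \<le> lam * elapsed j q"
  by (rule abs_rel_change_le_elapsed[OF tilde_excess_ge])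

lemma abs_rel_change_le_lam: "\<bar>rel_change j q\<bar> \<le> lam"
  using abs_rel_change_le[of j q] elapsed_le_1[of j q] lam_pos
  by (meson mult_left_le order.trans less_imp_le)

lemma before_pos: "pos_prices (before a ev)"
  by (simp add: before_def prices_pos)

lemma after_eq: "after a (j, q) = (before a (j, q))(j := before a (j, q) j * (1 + rel_change j q))"
  by (simp add: after_def before_Pair_self price_update)

subsection \<open>Prices change little within one time unit\<close>

definition min_ratio :: real where
  "min_ratio = 1 - 2 * lam"

lemma min_ratio_bounds: "9/10 \<le> min_ratio" "min_ratio \<le> 1"
  using lam_pos lam_le by (auto simp: min_ratio_def)

lemma min_ratio_pos: "0 < min_ratio"
  using min_ratio_bounds by linarith

lemma prices_ratio_updates:
  "a k N * (1 - lam * (\<Sum>q\<in>{N..<N + d}. elapsed k q)) \<le> a k (N + d) \<and>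
   a k (N + d) * (1 - lam * (\<Sum>q\<in>{N..<N + d}. elapsed k q)) \<le> a k N"
proof (induction d)
  case (Suc d)
  define x where "x = lam * (\<Sum>q\<in>{N..<N + d}. elapsed k q)"
  define y where "y = lam * elapsed k (N + d)"
  have xy: "lam * (\<Sum>q\<in>{N..<N + Suc d}. elapsed k q) = x + y"
    by (simp add: x_def y_def distrib_left)
  have x0: "0 \<le> x" using lam_pos by (simp add: x_def sum_nonneg elapsed_nonneg)
  have y0: "0 \<le> y" "y \<le> lam"
    using lam_pos elapsed_nonneg[of k "N+d"] elapsed_le_1[of k "N+d"]
      by (auto simp: y_def mult_left_le)
  have r: "\<bar>rel_change k (N + d)\<bar> \<le> y" using abs_rel_change_le by (simp add: y_def)
  have step: "a k (N + Suc d) = a k (N + d) * (1 + rel_change k (N + d))"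
    by (simp add: price_update)
  have pos: "0 < a k (N + d)" "0 < a k N" by (simp_all add: price_pos)
  from Suc have IH: "a k N * (1 - x) \<le> a k (N + d)" "a k (N + d) * (1 - x) \<le> a k N"
    by (auto simp: x_def)
  have "a k N * (1 - (x + y)) \<le> (a k N * (1 - x)) * (1 - y)"
    using pos x0 y0 by (simp add: algebra_simps mult_nonneg_nonneg)
  also have "\<dots> \<le> a k (N + d) * (1 - y)"
    using IH(1) y0 lam_le by (intro mult_right_mono) auto
  also have "\<dots> \<le> a k (N + Suc d)"
    unfolding step using r pos by (intro mult_left_mono) auto
  finally have lower: "a k N * (1 - (x + y)) \<le> a k (N + Suc d)" .
  have upper: "a k (N + Suc d) * (1 - (x + y)) \<le> a k N"
  proof (cases "0 \<le> 1 - (x + y)")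
    case True
    have "a k (N + Suc d) * (1 - (x + y)) \<le> a k (N + d) * ((1 + y) * (1 - (x + y)))"
      unfolding step using r pos True by (simp add: mult.assoc mult_left_mono mult_right_mono)
    also have "\<dots> \<le> a k (N + d) * (1 - x)"
      using x0 y0 pos by (intro mult_left_mono) (auto simp: algebra_simps)
    finally show ?thesis using IH(2) by linarith
  next
    case False
    then show ?thesis using price_pos[of k "N + Suc d"] pos by (smt (verit) mult_pos_neg)
  qed
  show ?case unfolding xy using lower upper by blast
qed simp

lemma prices_comparable:
  assumes "ta \<le> tb" "tb \<le> ta + 1"
  shows "min_ratio * prices ta k \<le> prices tb k" "min_ratio * prices tb k \<le> prices ta k"
proof -
  define N where "N = num_updates k ta"
  define d where "d = num_updates k tb - N"
  have tb: "num_updates k tb = N + d"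
    using num_updates_mono[OF assms(1), of k] by (simp add: N_def d_def)
  have "(\<Sum>q\<in>{N..<N + d}. elapsed k q) \<le> 2"
    using sum_elapsed_window[OF assms(1), of k] assms(2) by (simp add: N_def tb)
  then have "lam * (\<Sum>q\<in>{N..<N + d}. elapsed k q) \<le> lam * 2"
    using lam_pos by (intro mult_left_mono) auto
  then have "min_ratio \<le> 1 - lam * (\<Sum>q\<in>{N..<N + d}. elapsed k q)"
    unfolding min_ratio_def by linarith
  then have "min_ratio * a k N \<le> a k (N + d)" "min_ratio * a k (N + d) \<le> a k N"
    using prices_ratio_updates[of k N d] price_pos[of k N] price_pos[of k "N + d"]
    by (smt (verit) mult.commute mult_left_mono)+
  then show "min_ratio * prices ta k \<le> prices tb k" "min_ratio * prices tb k \<le> prices ta k"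
    by (simp_all add: price_vec_eq N_def tb)
qed

subsection \<open>Descent of the potential at one update\<close>

abbreviation ev_elapsed :: "'g \<times> nat \<Rightarrow> real" where
  "ev_elapsed ev \<equiv> elapsed (fst ev) (snd ev)"

abbreviation ev_clipped :: "'g \<times> nat \<Rightarrow> real" where
  "ev_clipped ev \<equiv> clipped (fst ev) (snd ev)"

abbreviation spending_before :: "'g \<times> nat \<Rightarrow> real" where
  "spending_before ev \<equiv> spending (before a ev) (fst ev)"

text \<open>The events of other goods between the previous and the current update of a price: they
  are what makes the excess demand seen by the update differ from the current one.\<close>

definition window :: "'g \<times> nat \<Rightarrow> ('g \<times> nat) set" where
  "window ev = {l. prev_update s (fst ev) (snd ev) < event_time l \<and> event_time l < event_time ev}"

definition drift :: "'g \<times> nat \<Rightarrow> real" where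
  "drift ev = (\<Sum>l\<in>window ev. \<bar>rel_change (fst l) (snd l)\<bar>
      * joint_spending (before a l) (fst ev) (fst l))"

definition progress :: "'g \<times> nat \<Rightarrow> real" where
  "progress ev = a (fst ev) (snd ev) * ev_clipped ev * zt (fst ev) (snd ev)"

lemma window_subset: "window ev \<subseteq> events_before (event_time ev)"
  by (auto simp: window_def mem_events_before)

lemma finite_window: "finite (window ev)"
  using window_subset finite_events_before finite_subset by blast

lemma progress_nonneg: "0 \<le> progress ev"
proof -
  have "0 \<le> ev_clipped ev * zt (fst ev) (snd ev)" by (auto simp: clipped_def min_def)
  then show ?thesis unfolding progress_def using price_pos
    by (metis mult.assoc mult_nonneg_nonneg less_imp_le)
qed

lemma spending_before_nonneg: "0 \<le> spending_before ev"
  by (simp add: spending_nonneg before_pos)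

lemma prices_comparable_in_window:
  assumes "l \<in> window (j, q)"
  shows "min_ratio * before a (j, q) k \<le> before a l k"
    "min_ratio * before a l k \<le> before a (j, q) k"
proof -
  have l: "prev_update s j q < event_time l" "event_time l < s j q"
    using assms by (auto simp: window_def)
  moreover have "s j q \<le> event_time l + 1" using l elapsed_le_1[of j q] by (simp add: elapsed_def)
  ultimately show "min_ratio * before a (j, q) k \<le> before a l k"
    "min_ratio * before a l k \<le> before a (j, q) k"
    using prices_comparable[of "event_time l" "s j q" k] by (auto simp: before_def)
qed

lemma spending_drift_in_window:
  assumes t: "prev_update s j q < t" "t \<le> s j q"
  shows "\<bar>spending_before (j, q) - spending (prices t) j\<bar> \<le> drift (j, q) / min_ratio"
proof -
  let ?f = "\<lambda>l. \<bar>rel_change (fst l) (snd l)\<bar> * joint_spending (before a l) j (fst l) / min_ratio"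
  have "\<bar>spending_before (j, q) - spending (prices t) j\<bar>
      = \<bar>\<Sum>l\<in>events_before (s j q) - events_before t. spending (after a l) j - spending (before a l) j\<bar>"
    using telescoping_events_diff[OF t(2), of "\<lambda>P. spending P j" a] by (simp add: before_def)
  also have "\<dots> \<le> (\<Sum>l\<in>events_before (s j q) - events_before t. ?f l)"
  proof (intro order.trans[OF sum_abs] sum_mono)
    fix l assume l: "l \<in> events_before (s j q) - events_before t"
    obtain k q' where lq: "l = (k, q')" by (cases l)
    have tl: "t \<le> s k q'" "s k q' < s j q" using l lq by (auto simp: mem_events_before)
    have "k \<noteq> j"
    proof
      assume "k = j"
      then obtain c where "q = Suc c" "q' \<le> c" using tl update_time_less_iff by (cases q) auto
      then have "s j q' \<le> prev_update s j q" by (simp add: prev_update_Suc update_time_le_iff)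
      then show False using tl(1) t(1) \<open>k = j\<close> by simp
    qed
    moreover have "\<bar>rel_change k q'\<bar> \<le> 1 - min_ratio"
      using abs_rel_change_le_lam[of k q'] lam_pos by (simp add: min_ratio_def)
    ultimately show "\<bar>spending (after a l) j - spending (before a l) j\<bar> \<le> ?f l"
      unfolding lq after_eq using spending_change_other_good[OF before_pos _ min_ratio_pos] by simp
  qed
  also have "\<dots> \<le> (\<Sum>l\<in>window (j, q). ?f l)"
    using t min_ratio_pos
    by (intro sum_mono2 finite_window)
       (auto simp: mem_events_before window_def intro!: divide_nonneg_pos mult_nonneg_nonneg
         joint_spending_nonneg before_pos)
  also have "\<dots> = drift (j, q) / min_ratio" by (simp add: drift_def sum_divide_distrib)
  finally show ?thesis .
qed

text \<open>zt j q lies between excess demands at two times in the window, so a j q (1 + zt j q)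
  lies between the spendings on good j at those times.\<close>

lemma tilde_excess_vs_spending:
  assumes "prev_update s j q < s j q"
  shows "\<bar>a j q * (1 + zt j q) - spending_before (j, q)\<bar> \<le> drift (j, q) / min_ratio"
    and "min_ratio * spending_before (j, q) \<le> a j q * (1 + zt j q)"
proof -
  obtain t1 t2 where t12: "t1 \<in> {prev_update s j q<..s j q}" "t2 \<in> {prev_update s j q<..s j q}"
    and z1: "excess_demand D (prices t1) j \<le> zt j q"
    and z2: "zt j q \<le> excess_demand D (prices t2) j"
    using tilde_excess_between[OF assms] .
  have p: "prices t1 j = a j q" "prices t2 j = a j q" using t12 by (auto simp: price_vec_in_window)
  have x1: "spending (prices t1) j \<le> a j q * (1 + zt j q)"
    using z1 price_pos[of j q] unfolding excess_demand_eq[OF prices_pos_vec] p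
    by (simp add: field_simps)
  have x2: "a j q * (1 + zt j q) \<le> spending (prices t2) j"
    using z2 price_pos[of j q] unfolding excess_demand_eq[OF prices_pos_vec] p
    by (simp add: field_simps)
  show "\<bar>a j q * (1 + zt j q) - spending_before (j, q)\<bar> \<le> drift (j, q) / min_ratio"
    using spending_drift_in_window[of j q t1] spending_drift_in_window[of j q t2] t12 x1 x2
    by (auto simp: abs_le_iff)
  have "s j q \<le> t1 + 1" using t12 elapsed_le_1[of j q] by (simp add: elapsed_def)
  then have "min_ratio * prices t1 k \<le> prices (s j q) k" for k
    using prices_comparable(1)[of t1 "s j q" k] t12 by auto
  moreover have "prices (s j q) j = prices t1 j"
    using p(1) by (simp add: price_vec_eq num_updates_update_time)
  ultimately have "min_ratio * spending (prices (s j q)) j \<le> spending (prices t1) j"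
    by (rule spending_le_scaled[OF prices_pos_vec prices_pos_vec min_ratio_pos])
  then show "min_ratio * spending_before (j, q) \<le> a j q * (1 + zt j q)"
    using x1 by (simp add: before_def)
qed

lemma potential_event_le:
  "potential (after a (j, q)) - potential (before a (j, q))
     \<le> - lam * elapsed j q * progress (j, q)
       + 2 * lam^2 * elapsed j q * (clipped j q)^2 * spending_before (j, q)
       + lam * elapsed j q * \<bar>clipped j q\<bar> * drift (j, q) / min_ratio"
proof (cases "prev_update s j q < s j q")
  case True
  let ?p = "a j q" and ?r = "rel_change j q" and ?m = "clipped j q" and ?dt = "elapsed j q"
    and ?sp = "spending_before (j, q)"
  have "\<bar>?r\<bar> \<le> 1/2" using abs_rel_change_le_lam[of j q] lam_le by linarith
  then have E: "potential (after a (j, q)) - potential (before a (j, q))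
      \<le> ?r * ?p - ?r * ?sp + 2 * ?r^2 * ?sp"
    using potential_update_le[OF before_pos, of "rel_change j q" "(j, q)" j]
    unfolding after_eq by (simp add: before_Pair_self)
  have first: "?r * ?p - ?r * ?sp
      = - lam * ?dt * progress (j, q) + lam * ?dt * (?m * (?p * (1 + zt j q) - ?sp))"
    by (simp add: rel_change_def progress_def algebra_simps)
  have "?m * (?p * (1 + zt j q) - ?sp) \<le> \<bar>?m\<bar> * \<bar>?p * (1 + zt j q) - ?sp\<bar>"
    by (metis abs_ge_self abs_mult)
  also have "\<dots> \<le> \<bar>?m\<bar> * (drift (j, q) / min_ratio)"
    using tilde_excess_vs_spending(1)[OF True] by (intro mult_left_mono) auto
  finally have "?m * (?p * (1 + zt j q) - ?sp) \<le> \<bar>?m\<bar> * (drift (j, q) / min_ratio)" .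
  then have "(lam * ?dt) * (?m * (?p * (1 + zt j q) - ?sp))
      \<le> (lam * ?dt) * (\<bar>?m\<bar> * (drift (j, q) / min_ratio))"
    using lam_pos elapsed_nonneg[of j q] by (intro mult_left_mono) auto
  then have cross: "lam * ?dt * (?m * (?p * (1 + zt j q) - ?sp))
      \<le> lam * ?dt * \<bar>?m\<bar> * drift (j, q) / min_ratio"
    by (simp add: mult.assoc)
  have "2 * ?r^2 * ?sp = 2 * lam^2 * (?dt * ?dt) * ?m^2 * ?sp"
    by (simp add: rel_change_def power2_eq_square algebra_simps)
  also have "\<dots> \<le> 2 * lam^2 * ?dt * ?m^2 * ?sp"
    using elapsed_nonneg[of j q] elapsed_le_1[of j q] spending_before_nonneg[of "(j, q)"]
    by (intro mult_right_mono mult_left_mono) (auto simp: mult_left_le)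
  finally show ?thesis using E first cross by linarith
next
  case False
  then show ?thesis by (simp add: elapsed_eq_0 after_eq rel_change_def)
qed

lemma second_order_le_progress:
  "elapsed j q * (clipped j q)^2 * spending_before (j, q)
      \<le> (2 / min_ratio) * elapsed j q * progress (j, q)"
proof (cases "prev_update s j q < s j q")
  case True
  have spb: "min_ratio * spending_before (j, q) \<le> a j q * (1 + zt j q)"
    by (rule tilde_excess_vs_spending(2)[OF True])
  have p: "0 < a j q" by (rule price_pos)
  have "(clipped j q)^2 * spending_before (j, q) \<le> (2 / min_ratio) * progress (j, q)"
  proof (cases "zt j q \<le> 1")
    case True
    then have "a j q * (1 + zt j q) \<le> a j q * 2" using p by (intro mult_left_mono) auto
    then have "(zt j q)^2 * (min_ratio * spending_before (j, q)) \<le> (zt j q)^2 * (a j q * 2)"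
      using spb by (intro mult_left_mono) auto
    then have "min_ratio * ((zt j q)^2 * spending_before (j, q)) \<le> (zt j q)^2 * (a j q * 2)"
      by (simp add: mult.left_commute)
    then show ?thesis using True min_ratio_pos
      by (simp add: clipped_def progress_def field_simps power2_eq_square)
  next
    case False
    then have "a j q * (1 + zt j q) \<le> a j q * (2 * zt j q)" using p by (intro mult_left_mono) auto
    then have "spending_before (j, q) \<le> (2 / min_ratio) * (a j q * zt j q)"
      using spb min_ratio_pos by (simp add: field_simps)
    then show ?thesis using False by (simp add: clipped_def progress_def)
  qed
  then have "elapsed j q * ((clipped j q)^2 * spending_before (j, q))
      \<le> elapsed j q * ((2 / min_ratio) * progress (j, q))"
    using elapsed_nonneg[of j q] by (intro mult_left_mono) auto
  then show ?thesis by (simp add: algebra_simps)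
qed (simp add: elapsed_eq_0)

definition second_order :: "'g \<times> nat \<Rightarrow> real" where
  "second_order ev = ev_elapsed ev * (ev_clipped ev)^2 * spending_before ev"

abbreviation cross_sum :: "'g \<times> nat \<Rightarrow> real" where
  "cross_sum ev \<equiv> (\<Sum>l\<in>window ev. ev_elapsed l * (ev_clipped l)^2
      * joint_spending (before a l) (fst ev) (fst l))"

lemma window_elapsed_good_le_2: "(\<Sum>l\<in>{l\<in>window (j, q). fst l = k}. ev_elapsed l) \<le> 2"
proof -
  let ?Q = "{num_updates k (prev_update s j q)..<num_updates k (s j q)}"
  have "{l\<in>window (j, q). fst l = k} \<subseteq> Pair k ` ?Q"
  proof
    fix l assume l: "l \<in> {l\<in>window (j, q). fst l = k}"
    then obtain q' where lq: "l = (k, q')" by (cases l) auto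
    have "prev_update s j q < s k q'" "s k q' < s j q" using l lq by (auto simp: window_def)
    then show "l \<in> Pair k ` ?Q"
      using lq update_before_iff[of k q' "prev_update s j q"] update_before_iff[of k q' "s j q"] by auto
  qed
  then have "(\<Sum>l\<in>{l\<in>window (j, q). fst l = k}. ev_elapsed l) \<le> (\<Sum>l\<in>Pair k ` ?Q. ev_elapsed l)"
    by (intro sum_mono2) (auto simp: elapsed_nonneg)
  also have "\<dots> = (\<Sum>q'\<in>?Q. elapsed k q')"
    by (subst sum.reindex) (auto simp: inj_on_def)
  also have "\<dots> \<le> s j q - prev_update s j q + 1" by (rule sum_elapsed_window[OF prev_update_le])
  also have "\<dots> \<le> 2" using elapsed_le_1[of j q] by (simp add: elapsed_def)
  finally show ?thesis .
qed

lemma window_elapsed_share_le_2: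
  assumes P: "pos_prices P"
  shows "(\<Sum>l\<in>window (j, q). ev_elapsed l * share P i (fst l)) \<le> 2"
proof -
  have "(\<Sum>l\<in>window (j, q). ev_elapsed l * share P i (fst l))
      = (\<Sum>k\<in>UNIV. \<Sum>l\<in>{l\<in>window (j, q). fst l = k}. ev_elapsed l * share P i (fst l))"
    by (rule sum.group[symmetric]) (auto simp: finite_window)
  also have "\<dots> = (\<Sum>k\<in>UNIV. share P i k * (\<Sum>l\<in>{l\<in>window (j, q). fst l = k}. ev_elapsed l))"
    by (intro sum.cong refl) (simp add: sum_distrib_left mult.commute)
  also have "\<dots> \<le> (\<Sum>k\<in>UNIV. share P i k * 2)"
    by (intro sum_mono mult_left_mono window_elapsed_good_le_2) (simp add: share_nonneg P)
  also have "\<dots> = 2" using sum_share[OF P, of i] by (simp add: sum_distrib_right[symmetric])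
  finally show ?thesis .
qed

lemma joint_spending_window_le:
  assumes "l \<in> window (j, q)"
  shows "joint_spending (before a l) j k \<le> joint_spending (before a (j, q)) j k / min_ratio^4"
proof -
  let ?P = "before a (j, q)"
  have share: "share (before a l) i k' \<le> share ?P i k' / min_ratio^2" for i k'
    using prices_comparable_in_window[OF assms]
    by (intro share_le_comparable[OF before_pos before_pos min_ratio_pos]) auto
  have "joint_spending (before a l) j k
      \<le> (\<Sum>i\<in>UNIV. e i * ((share ?P i j / min_ratio^2) * (share ?P i k / min_ratio^2)))"
    unfolding joint_spending_def mult.assoc
    by (intro sum_mono mult_left_mono mult_mono share)
       (auto simp: share_nonneg before_pos min_ratio_pos budget_pos less_imp_le)
  also have "\<dots> = joint_spending ?P j k / min_ratio^4"
    by (simp add: joint_spending_def sum_divide_distrib eval_nat_numeral mult_ac)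
  finally show ?thesis .
qed

lemma window_joint_spending_le:
  "(\<Sum>l\<in>window (j, q). ev_elapsed l * joint_spending (before a l) j (fst l))
     \<le> (2 / min_ratio^4) * spending_before (j, q)"
proof -
  let ?P = "before a (j, q)"
  have "(\<Sum>l\<in>window (j, q). ev_elapsed l * joint_spending (before a l) j (fst l))
      \<le> (\<Sum>l\<in>window (j, q). ev_elapsed l * joint_spending ?P j (fst l)) / min_ratio^4"
    unfolding sum_divide_distrib using joint_spending_window_le elapsed_nonneg
    by (intro sum_mono) (metis mult_left_mono times_divide_eq_right)
  also have "(\<Sum>l\<in>window (j, q). ev_elapsed l * joint_spending ?P j (fst l))
      = (\<Sum>i\<in>UNIV. e i * share ?P i j * (\<Sum>l\<in>window (j, q). ev_elapsed l * share ?P i (fst l)))"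
    unfolding joint_spending_def sum_distrib_left by (subst sum.swap) (simp add: mult_ac)
  also have "\<dots> \<le> (\<Sum>i\<in>UNIV. e i * share ?P i j * 2)"
    using window_elapsed_share_le_2[OF before_pos]
    by (intro sum_mono mult_left_mono) (auto simp: budget_pos share_nonneg before_pos less_imp_le)
  also have "\<dots> = 2 * spending_before (j, q)"
    by (simp add: spending_def sum_distrib_left mult_ac)
  finally show ?thesis using min_ratio_pos by (simp add: divide_right_mono)
qed

text \<open>The drift term is split by AM-GM, |m| |m_l| \<le> (m^2 + m_l^2)/2, into a second-order term of
  the update itself and second-order terms of the updates in its window.\<close>

lemma drift_term_le:
  "lam * ev_elapsed ev * \<bar>ev_clipped ev\<bar> * drift ev / min_ratio
     \<le> (lam^2 / min_ratio^5) * second_order ev + (lam^2 / (2 * min_ratio)) * (ev_elapsed ev * cross_sum ev)"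
proof -
  have am_gm: "\<bar>x\<bar> * \<bar>y\<bar> \<le> (x^2 + y^2) / 2" for x y :: real
    using sum_squares_bound[of "\<bar>x\<bar>" "\<bar>y\<bar>"] by simp
  obtain j q where ev: "ev = (j, q)" by (cases ev)
  let ?c = "\<lambda>l. joint_spending (before a l) j (fst l)" and ?m = "clipped j q" and ?dt = "elapsed j q"
  have c: "0 \<le> ?c l" for l by (simp add: joint_spending_nonneg before_pos)
  have "lam * ?dt * \<bar>?m\<bar> * drift ev / min_ratio
      = (\<Sum>l\<in>window ev. (lam^2 / min_ratio) * (?dt * ev_elapsed l * ?c l) * (\<bar>?m\<bar> * \<bar>ev_clipped l\<bar>))"
    by (simp add: ev drift_def abs_rel_change sum_distrib_left sum_divide_distrib power2_eq_square mult_ac)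
  also have "\<dots> \<le> (\<Sum>l\<in>window ev. (lam^2 / min_ratio) * (?dt * ev_elapsed l * ?c l)
      * ((?m^2 + (ev_clipped l)^2) / 2))"
    using am_gm min_ratio_pos by (intro sum_mono mult_left_mono) (auto simp: elapsed_nonneg c)
  also have "\<dots> = (lam^2 / (2 * min_ratio)) * ?dt * ?m^2 * (\<Sum>l\<in>window ev. ev_elapsed l * ?c l)
      + (lam^2 / (2 * min_ratio)) * (?dt * cross_sum ev)"
    by (simp add: ev sum_distrib_left sum_divide_distrib add_divide_distrib sum.distrib algebra_simps)
  also have "\<dots> \<le> (lam^2 / (2 * min_ratio)) * ?dt * ?m^2 * ((2 / min_ratio^4) * spending_before ev)
      + (lam^2 / (2 * min_ratio)) * (?dt * cross_sum ev)"
    using window_joint_spending_le[of j q] min_ratio_pos elapsed_nonneg[of j q] unfolding ev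
    by (intro add_right_mono mult_left_mono) auto
  also have "(lam^2 / (2 * min_ratio)) * ?dt * ?m^2 * ((2 / min_ratio^4) * spending_before ev)
      = (lam^2 / min_ratio^5) * second_order ev"
    using min_ratio_pos by (simp add: ev second_order_def field_simps power_def)
  finally show ?thesis by (simp add: ev)
qed

lemma potential_event_le_second_order:
  "potential (after a ev) - potential (before a ev)
     \<le> - lam * ev_elapsed ev * progress ev + (2 * lam^2 + lam^2 / min_ratio^5) * second_order ev
       + (lam^2 / (2 * min_ratio)) * (ev_elapsed ev * cross_sum ev)"
  using potential_event_le[of "fst ev" "snd ev"] drift_term_le[of ev]
  by (simp add: second_order_def distrib_right)

lemma mem_window_unique: "l \<in> window (j, q1) \<Longrightarrow> l \<in> window (j, q2) \<Longrightarrow> q1 = q2"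
proof (induction q1 q2 rule: linorder_wlog)
  case (le q1 q2)
  show ?case
  proof (rule ccontr)
    assume "q1 \<noteq> q2"
    with le obtain c where "q2 = Suc c" "q1 \<le> c" by (cases q2) auto
    then have "s j q1 \<le> prev_update s j q2" by (simp add: prev_update_Suc update_time_le_iff)
    then show False using le.prems by (auto simp: window_def)
  qed
qed (simp add: eq_commute)

text \<open>Double counting: an update l lies in the window of at most one update of each good j,
  and summing its joint spendings over j gives its own spending.\<close>

lemma sum_cross_sum_le:
  "(\<Sum>ev\<in>events_before T. ev_elapsed ev * cross_sum ev) \<le> (\<Sum>l\<in>events_before T. second_order l)"
proof -
  define f where "f ev l = ev_elapsed ev * (ev_elapsed l * (ev_clipped l)^2
      * joint_spending (before a l) (fst ev) (fst l))"
    for ev l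
  have "(\<Sum>ev\<in>events_before T. ev_elapsed ev * cross_sum ev)
      = (\<Sum>ev\<in>events_before T. \<Sum>l\<in>{l. l \<in> events_before T \<and> l \<in> window ev}. f ev l)"
  proof (intro sum.cong refl)
    fix ev assume "ev \<in> events_before T"
    then have "{l. l \<in> events_before T \<and> l \<in> window ev} = window ev"
      using window_subset[of ev] events_before_mono[of "event_time ev" T]
        by (auto simp: mem_events_before)
    then show "ev_elapsed ev * cross_sum ev = (\<Sum>l\<in>{l. l \<in> events_before T \<and> l \<in> window ev}. f ev l)"
      by (simp add: f_def sum_distrib_left)
  qed
  also have "\<dots> = (\<Sum>l\<in>events_before T. \<Sum>ev\<in>{ev. ev \<in> events_before T \<and> l \<in> window ev}. f ev l)"
    by (rule sum.swap_restrict[OF finite_events_before finite_events_before])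
  also have "\<dots> \<le> (\<Sum>l\<in>events_before T. second_order l)"
  proof (rule sum_mono)
    fix l
    let ?A = "{ev. ev \<in> events_before T \<and> l \<in> window ev}"
    let ?g = "\<lambda>j. ev_elapsed l * (ev_clipped l)^2 * joint_spending (before a l) j (fst l)"
    have "(\<Sum>ev\<in>?A. f ev l) = (\<Sum>j\<in>UNIV. \<Sum>ev\<in>{ev \<in> ?A. fst ev = j}. f ev l)"
      by (rule sum.group[symmetric]) (auto simp: finite_events_before)
    also have "\<dots> \<le> (\<Sum>j\<in>UNIV. ?g j)"
    proof (intro sum_mono sum_le_if_subsingleton)
      fix j x y assume "x \<in> {ev \<in> ?A. fst ev = j}" "y \<in> {ev \<in> ?A. fst ev = j}"
      then show "x = y" using mem_window_unique[of l j "snd x" "snd y"] by (cases x, cases y) auto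
    next
      fix j x assume "x \<in> {ev \<in> ?A. fst ev = j}"
      then show "f x l \<le> ?g j"
        using elapsed_le_1 elapsed_nonneg joint_spending_nonneg[OF before_pos]
        by (auto simp: f_def joint_spending_nonneg before_pos intro!: mult_left_le_one_le mult_nonneg_nonneg)
    qed (auto simp: elapsed_nonneg joint_spending_nonneg before_pos)
    also have "\<dots> = second_order l"
      using sum_joint_spending[OF before_pos, of l "fst l"]
      by (simp add: second_order_def sum_distrib_left[symmetric])
    finally show "(\<Sum>ev\<in>?A. f ev l) \<le> second_order l" .
  qed
  finally show ?thesis .
qed

lemma potential_coefficient_le:
  "(2 * lam^2 + lam^2 / min_ratio^5 + lam^2 / (2 * min_ratio)) * (2 / min_ratio) \<le> lam / 2"
proof -
  define u where "u = 1 / min_ratio"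
  have u: "0 < u" "u \<le> 10/9" using min_ratio_bounds unfolding u_def by (auto simp: divide_le_eq)
  have "(2 * lam^2 + lam^2 / min_ratio^5 + lam^2 / (2 * min_ratio)) * (2 / min_ratio)
      = lam^2 * ((2 + u^5 + u/2) * (2 * u))"
    using min_ratio_pos unfolding u_def by (simp add: field_simps power_def)
  also have "\<dots> \<le> lam^2 * ((2 + (10/9)^5 + (10/9)/2) * (2 * (10/9)))"
    using u by (intro mult_left_mono mult_mono add_mono power_mono) auto
  also have "\<dots> \<le> lam^2 * 10" by (simp add: power_divide)
  also have "\<dots> \<le> lam * (1/2)"
    using lam_pos lam_le by (simp add: power2_eq_square mult_left_mono)
  finally show ?thesis by simp
qed

definition cum_progress :: "real \<Rightarrow> real" where
  "cum_progress T = (\<Sum>ev\<in>events_before T. ev_elapsed ev * progress ev)"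

lemma cum_progress_nonneg: "0 \<le> cum_progress T"
  unfolding cum_progress_def by (intro sum_nonneg mult_nonneg_nonneg elapsed_nonneg progress_nonneg)

lemma cum_progress_diff:
  "T1 \<le> T2 \<Longrightarrow> cum_progress T2 - cum_progress T1
     = (\<Sum>ev\<in>events_before T2 - events_before T1. ev_elapsed ev * progress ev)"
  unfolding cum_progress_def
  using sum.subset_diff[OF events_before_mono finite_events_before,
      of T1 T2 "\<lambda>ev. ev_elapsed ev * progress ev"] by simp

lemma cum_progress_mono:
  assumes "T1 \<le> T2"
  shows "cum_progress T1 \<le> cum_progress T2"
proof -
  have "0 \<le> (\<Sum>ev\<in>events_before T2 - events_before T1. ev_elapsed ev * progress ev)"
    by (intro sum_nonneg mult_nonneg_nonneg elapsed_nonneg progress_nonneg)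
  then show ?thesis using cum_progress_diff[OF assms] by simp
qed

lemma potential_decrease:
  "potential (prices T) - potential (\<lambda>j. a j 0) \<le> - (lam / 2) * cum_progress T"
proof -
  define c1 where "c1 = 2 * lam^2 + lam^2 / min_ratio^5"
  define c2 where "c2 = lam^2 / (2 * min_ratio)"
  have c: "0 \<le> c1" "0 \<le> c2" using min_ratio_pos by (auto simp: c1_def c2_def)
  have "(\<Sum>ev\<in>events_before T. second_order ev)
      \<le> (\<Sum>ev\<in>events_before T. (2 / min_ratio) * (ev_elapsed ev * progress ev))"
  proof (intro sum_mono)
    fix ev :: "'g \<times> nat"
    show "second_order ev \<le> (2 / min_ratio) * (ev_elapsed ev * progress ev)"
      using second_order_le_progress[of "fst ev" "snd ev"]
        by (simp add: second_order_def mult.assoc)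
  qed
  then have second: "(\<Sum>ev\<in>events_before T. second_order ev) \<le> (2 / min_ratio) * cum_progress T"
    by (simp add: cum_progress_def sum_distrib_left)
  have "potential (prices T) - potential (\<lambda>j. a j 0)
      = (\<Sum>ev\<in>events_before T. potential (after a ev) - potential (before a ev))"
    using telescoping_events[of potential a T] by simp
  also have "\<dots> \<le> (\<Sum>ev\<in>events_before T. - lam * ev_elapsed ev * progress ev + c1 * second_order ev
      + c2 * (ev_elapsed ev * cross_sum ev))"
    unfolding c1_def c2_def by (intro sum_mono potential_event_le_second_order)
  also have "\<dots> = - lam * cum_progress T + c1 * (\<Sum>ev\<in>events_before T. second_order ev)
      + c2 * (\<Sum>ev\<in>events_before T. ev_elapsed ev * cross_sum ev)"
    by (simp add: cum_progress_def sum.distrib sum_subtractf sum_negf sum_distrib_left mult.assoc)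
  also have "\<dots> \<le> - lam * cum_progress T + (c1 + c2) * ((2 / min_ratio) * cum_progress T)"
  proof -
    have "c2 * (\<Sum>ev\<in>events_before T. ev_elapsed ev * cross_sum ev)
        \<le> c2 * ((2 / min_ratio) * cum_progress T)"
      using sum_cross_sum_le[of T] second c(2) by (intro mult_left_mono) auto
    moreover have "c1 * (\<Sum>ev\<in>events_before T. second_order ev)
        \<le> c1 * ((2 / min_ratio) * cum_progress T)"
      using second c(1) by (rule mult_left_mono)
    ultimately show ?thesis by (simp only: distrib_right)
  qed
  also have "\<dots> \<le> - (lam / 2) * cum_progress T"
  proof -
    have "((c1 + c2) * (2 / min_ratio)) * cum_progress T \<le> (lam / 2) * cum_progress T"
      using potential_coefficient_le cum_progress_nonneg unfolding c1_def c2_def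
      by (intro mult_right_mono) auto
    moreover have "(c1 + c2) * ((2 / min_ratio) * cum_progress T)
        = ((c1 + c2) * (2 / min_ratio)) * cum_progress T"
      by (rule mult.assoc[symmetric])
    ultimately show ?thesis by linarith
  qed
  finally show ?thesis .
qed

subsection \<open>Convergence\<close>

lemma prices_and_progress_bounded:
  obtains B G where "0 \<le> B" "\<And>T j. prices T j \<le> B" "\<And>T. cum_progress T \<le> G"
proof -
  obtain C where C: "\<And>P. pos_prices P \<Longrightarrow> (\<Sum>j\<in>UNIV. P j) / 2 - C \<le> potential P"
    using potential_coercive by blast
  define \<Phi>0 where "\<Phi>0 = potential (\<lambda>j. a j 0)"
  have sum_pos: "0 \<le> (\<Sum>k\<in>UNIV. prices T k)" for T
    by (intro sum_nonneg) (simp add: prices_pos less_imp_le)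
  have decr: "potential (prices T) + (lam / 2) * cum_progress T \<le> \<Phi>0" for T
    using potential_decrease[of T] unfolding \<Phi>0_def by linarith
  have "prices T j \<le> 2 * (\<Phi>0 + C)" for T j
  proof -
    have "prices T j \<le> (\<Sum>k\<in>UNIV. prices T k)"
      by (rule member_le_sum) (auto simp: prices_pos less_imp_le)
    moreover have "0 \<le> (lam / 2) * cum_progress T"
      using lam_pos cum_progress_nonneg[of T] by simp
    moreover have "(\<Sum>k\<in>UNIV. prices T k) \<le> 2 * (\<Phi>0 + C)"
      using C[OF prices_pos_vec, of T] decr[of T] calculation(2) by (simp add: field_simps)
    ultimately show ?thesis by linarith
  qed
  moreover have "cum_progress T \<le> (2 / lam) * (\<Phi>0 + C)" for T
    using C[OF prices_pos_vec, of T] decr[of T] sum_pos[of T] lam_pos by (simp add: field_simps)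
  moreover have "0 \<le> 2 * (\<Phi>0 + C)"
    using calculation(1)[of 0 undefined] prices_pos[of 0 undefined] by linarith
  ultimately show thesis by (intro that[of "2 * (\<Phi>0 + C)" "(2 / lam) * (\<Phi>0 + C)"]) auto
qed

text \<open>Split the relative price change with |m| \<le> d + m^2/d: the first part is small for small d,
  the second is controlled by the cumulative progress, which converges.\<close>

lemma price_step_le:
  assumes d: "0 < d" and B: "\<And>T j. prices T j \<le> B"
  shows "a j q * \<bar>rel_change j q\<bar> \<le> lam * (d * B * elapsed j q + elapsed j q * progress (j, q) / d)"
proof -
  have p: "0 < a j q" by (rule price_pos)
  have "a j q * \<bar>clipped j q\<bar> \<le> a j q * (d + (clipped j q)^2 / d)"
    using abs_le_add_square_div[OF d] p by (intro mult_left_mono) auto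
  also have "\<dots> \<le> d * B + progress (j, q) / d"
  proof -
    have "a j q \<le> B" using B[of "s j q" j] by (simp add: price_vec_eq num_updates_update_time)
    then have "a j q * d \<le> B * d" using d by (intro mult_right_mono) auto
    moreover have "a j q * (clipped j q)^2 \<le> progress (j, q)"
      using p by (auto simp: progress_def clipped_def power2_eq_square mult.assoc min_def
          intro!: mult_left_mono)
    then have "a j q * (clipped j q)^2 / d \<le> progress (j, q) / d"
      using d by (intro divide_right_mono) auto
    ultimately show ?thesis by (simp add: algebra_simps)
  qed
  finally have "lam * elapsed j q * (a j q * \<bar>clipped j q\<bar>)
      \<le> lam * elapsed j q * (d * B + progress (j, q) / d)"
    using lam_pos elapsed_nonneg[of j q] by (intro mult_left_mono) auto
  then show ?thesis by (simp add: abs_rel_change algebra_simps)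
qed

lemma price_change_le:
  assumes d: "0 < d" and B: "0 \<le> B" "\<And>T j. prices T j \<le> B" and t: "t \<le> t'" "t' \<le> t + 1"
  shows "\<bar>price_at s a j t - price_at s a j t'\<bar>
      \<le> lam * (2 * d * B + (cum_progress t' - cum_progress t) / d)"
proof -
  define Q where "Q = {num_updates j t..<num_updates j t'}"
  have Q_events: "Pair j ` Q \<subseteq> events_before t' - events_before t"
    using update_before_iff[of j _ t] update_before_iff[of j _ t']
      by (auto simp: Q_def mem_events_before)
  have "\<bar>price_at s a j t - price_at s a j t'\<bar> = \<bar>\<Sum>q\<in>Q. a j (Suc q) - a j q\<bar>"
    using sum_Suc_diff'[OF num_updates_mono[OF t(1)], of "a j"] by (simp add: price_at_eq Q_def)
  also have "\<dots> \<le> (\<Sum>q\<in>Q. a j q * \<bar>rel_change j q\<bar>)"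
    by (intro order.trans[OF sum_abs] sum_mono)
       (simp add: price_update algebra_simps abs_mult price_pos less_imp_le)
  also have "\<dots> \<le> (\<Sum>q\<in>Q. lam * (d * B * elapsed j q + elapsed j q * progress (j, q) / d))"
    by (intro sum_mono price_step_le[OF d B(2)])
  also have "\<dots> = lam * (d * B * (\<Sum>q\<in>Q. elapsed j q) + (\<Sum>q\<in>Q. elapsed j q * progress (j, q)) / d)"
    by (simp add: sum_distrib_left[symmetric] sum.distrib sum_divide_distrib mult.assoc)
  also have "\<dots> \<le> lam * (d * B * 2 + (cum_progress t' - cum_progress t) / d)"
  proof -
    have "(\<Sum>q\<in>Q. elapsed j q) \<le> 2"
      using sum_elapsed_window[OF t(1), of j] t(2) by (simp add: Q_def)
    then have first: "d * B * (\<Sum>q\<in>Q. elapsed j q) \<le> d * B * 2"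
      using d B(1) by (intro mult_left_mono) auto
    have "(\<Sum>q\<in>Q. elapsed j q * progress (j, q)) = (\<Sum>ev\<in>Pair j ` Q. ev_elapsed ev * progress ev)"
      by (subst sum.reindex) (auto simp: inj_on_def)
    also have "\<dots> \<le> cum_progress t' - cum_progress t"
      unfolding cum_progress_diff[OF t(1)] using Q_events
      by (intro sum_mono2) (auto simp: finite_events_before elapsed_nonneg progress_nonneg)
    finally have "(\<Sum>q\<in>Q. elapsed j q * progress (j, q)) / d
        \<le> (cum_progress t' - cum_progress t) / d"
      using d by (intro divide_right_mono) auto
    then show ?thesis using lam_pos add_mono[OF first] by (intro mult_left_mono) auto
  qed
  finally show ?thesis by (simp add: mult_ac)
qed

lemma price_changes_vanish:
  "\<forall>\<epsilon>>0. \<exists>T. \<forall>j t dt. T \<le> t \<longrightarrow> 0 \<le> dt \<longrightarrow> dt \<le> 1 \<longrightarrow>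
     \<bar>price_at s a j t - price_at s a j (t + dt)\<bar> \<le> \<epsilon>"
proof (intro allI impI)
  fix \<epsilon> :: real assume \<epsilon>: "0 < \<epsilon>"
  obtain B G where B: "0 \<le> B" "\<And>T j. prices T j \<le> B" and G: "\<And>T. cum_progress T \<le> G"
    using prices_and_progress_bounded by metis
  define d where "d = \<epsilon> / (4 * lam * (B + 1))"
  define \<eta> where "\<eta> = \<epsilon> * d / (2 * lam)"
  have d: "0 < d" using \<epsilon> lam_pos B(1) by (simp add: d_def)
  have \<eta>: "0 < \<eta>" using \<epsilon> d lam_pos by (simp add: \<eta>_def)
  have bdd: "bdd_above (range cum_progress)" using G by (intro bdd_aboveI2)
  obtain T0 where T0: "(SUP T. cum_progress T) - \<eta> < cum_progress T0"
    using less_cSUP_iff[OF _ bdd, of "(SUP T. cum_progress T) - \<eta>"] \<eta> by auto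
  show "\<exists>T. \<forall>j t dt. T \<le> t \<longrightarrow> 0 \<le> dt \<longrightarrow> dt \<le> 1 \<longrightarrow>
     \<bar>price_at s a j t - price_at s a j (t + dt)\<bar> \<le> \<epsilon>"
  proof (intro exI allI impI)
    fix j and t dt :: real assume t: "T0 \<le> t" and dt: "0 \<le> dt" "dt \<le> 1"
    have "cum_progress (t + dt) - cum_progress t \<le> \<eta>"
      using cSUP_upper[OF _ bdd, of "t + dt"] cum_progress_mono[OF t] T0 by simp
    then have "\<bar>price_at s a j t - price_at s a j (t + dt)\<bar> \<le> lam * (2 * d * B + \<eta> / d)"
      using price_change_le[OF d B, of t "t + dt" j] dt d lam_pos
      by (smt (verit) divide_right_mono mult_left_mono)
    also have "\<dots> \<le> lam * (2 * d * (B + 1)) + lam * (\<eta> / d)"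
      using lam_pos d by (simp add: distrib_left mult_left_mono)
    also have "\<dots> = \<epsilon>"
    proof -
      have "lam * (2 * d * (B + 1)) = \<epsilon> / 2" using lam_pos B(1) by (simp add: d_def)
      moreover have "lam * (\<eta> / d) = \<epsilon> / 2" using lam_pos d by (simp add: \<eta>_def)
      ultimately show ?thesis by linarith
    qed
    finally show "\<bar>price_at s a j t - price_at s a j (t + dt)\<bar> \<le> \<epsilon>" .
  qed
qed

end

theorem mainTheorem7:
  fixes e :: "'b::finite \<Rightarrow> real" and S :: "'b \<Rightarrow> 'g::finite set"
    and b :: "'b \<Rightarrow> 'g \<Rightarrow> real"
    and D :: "('g \<Rightarrow> real) \<Rightarrow> 'b \<Rightarrow> 'g \<Rightarrow> real"
    and s :: "'g \<Rightarrow> nat \<Rightarrow> real" and a :: "'g \<Rightarrow> nat \<Rightarrow> real"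
    and zt :: "'g \<Rightarrow> nat \<Rightarrow> real" and lam :: real
  assumes "leontief_fisher_market e S b"
    and "is_leontief_demand e S b D"
    and "async_schedule s"
    and "0 < lam" and "lam \<le> 1 / 23.46"
    and "\<forall>j. 0 < a j 0"
    and "tatonnement_run D s a zt lam"
  shows "\<forall>\<epsilon>>0. \<exists>T. \<forall>j t dt. T \<le> t \<longrightarrow> 0 \<le> dt \<longrightarrow> dt \<le> 1 \<longrightarrow>
           \<bar>price_at s a j t - price_at s a j (t + dt)\<bar> \<le> \<epsilon>"
proof -
  interpret tatonnement e S b D s a zt lam
    using assms by unfold_locales auto
  show ?thesis by (rule price_changes_vanish)
qed

end
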